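(* Let $z>0$, $a>0$ and $b>1$. Then $$\Gamma(a)\,|U(a,b,z)|\le\begin{cases}e^z z^{1-b}\Gamma(b-1), & a\ge1,\\ a^{-1}2^{b-a-1}+2^{1-a}e^zz^{1-b}\Gamma(b-1), & a<1.\end{cases}$$ Moreover, for any $a>0$, $b>0$ and $z>0$, $$\Gamma(a)\Big|\frac{d}{dz}U(a,b,z)\Big|\le\Gamma(b)\,e^zz^{-b}.$$
   Context: $U(a,b,z)$ is Kummer's (Tricomi's) confluent hypergeometric function, which for $a,z>0$ has the representation $\Gamma(a)U(a,b,z)=\int_0^\infty e^{-zt}t^{a-1}(1+t)^{b-a-1}dt$. *)

theory Defs
  imports "HOL-Analysis.Analysis"
begin

text \<open>Tricomi's confluent hypergeometric function U(a,b,z), defined for a, z > 0 via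
  Gamma(a) U(a,b,z) = integral over (0,infinity) of exp(-z t) t^(a-1) (1+t)^(b-a-1) dt.\<close>
definition KummerU :: "real \<Rightarrow> real \<Rightarrow> real \<Rightarrow> real" where
  "KummerU a b z =
     integral {0<..} (\<lambda>t. exp (- z * t) * t powr (a - 1) * (1 + t) powr (b - a - 1)) / Gamma a"

end

theory Submission
  imports Defs
begin

text \<open>
  For \<open>p \<ge> 0\<close>, replacing \<open>t^p\<close> by \<open>(1 + t)^p\<close> dominates the integrand
  \<open>exp(-z t) t^p (1 + t)^(q - p)\<close> by \<open>exp(-z t) (1 + t)^q\<close>, and the shift \<open>s = 1 + t\<close>
  bounds the integral of the latter by \<open>e^z \<Gamma>(q + 1) z^(-q-1)\<close>. With \<open>p = a - 1\<close> this is
  the case \<open>a \<ge> 1\<close>; with \<open>p = a\<close>, after differentiating under the integral sign, it is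
  the derivative bound. For \<open>a < 1\<close> the integral is split at \<open>t = 1\<close>: beyond 1,
  \<open>t^(a-1) \<le> 2^(1-a) (1 + t)^(a-1)\<close>, while on \<open>(0, 1]\<close> the integrand is at most
  \<open>2^(b-a-1) t^(a-1)\<close>, or \<open>t^(b-2)\<close> when \<open>b < a + 1\<close>; this last piece is absorbed,
  together with the tail, into a single Gamma integral.
\<close>

lemma has_integral_insert_iff:
  fixes f :: "'n::euclidean_space \<Rightarrow> 'a::banach"
  shows "(f has_integral I) (insert x S) \<longleftrightarrow> (f has_integral I) S"
  by (rule has_integral_spike_set_eq) (auto intro: negligible_subset[of "{x}"])

lemma integrable_on_subset_nonneg:
  fixes f :: "real \<Rightarrow> real"
  assumes "f integrable_on S" "\<And>x. x \<in> S \<Longrightarrow> 0 \<le> f x" "T \<in> sets lebesgue" "T \<subseteq> S"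
  shows "f integrable_on T"
proof -
  have "f absolutely_integrable_on S"
    using assms by (auto intro: nonnegative_absolutely_integrable_1)
  then have "f absolutely_integrable_on T"
    using set_integrable_subset assms by blast
  then show ?thesis
    by (simp add: absolutely_integrable_on_def)
qed

lemma has_integral_affine_substitution_nonneg:
  fixes f :: "real \<Rightarrow> real"
  assumes m: "m > 0" and S: "S \<in> sets lebesgue"
    and f: "(f has_integral I) ((\<lambda>x. m * x + d) ` S)"
    and nonneg: "\<And>y. y \<in> (\<lambda>x. m * x + d) ` S \<Longrightarrow> 0 \<le> f y"
  shows "((\<lambda>x. m * f (m * x + d)) has_integral I) S"
proof -
  have der: "((\<lambda>x. m * x + d) has_field_derivative m) (at x within S)" for x
    by (auto intro!: derivative_eq_intros)
  have inj: "inj_on (\<lambda>x. m * x + d) S"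
    using m by (simp add: inj_on_def)
  have "f absolutely_integrable_on (\<lambda>x. m * x + d) ` S"
    using f nonneg by (intro nonnegative_absolutely_integrable_1) (auto simp: has_integral_integrable)
  then have "(\<lambda>x. \<bar>m\<bar> * f (m * x + d)) absolutely_integrable_on S \<and>
             integral S (\<lambda>x. \<bar>m\<bar> * f (m * x + d)) = I"
    using has_absolute_integral_change_of_variables_1'[OF S der inj, of f I] f
    by (simp add: integral_unique)
  then show ?thesis
    using m by (metis abs_of_pos absolutely_integrable_on_def has_integral_integral)
qed

lemma has_integral_exp_mult_powr:
  fixes c p :: real
  assumes c: "c > 0" and p: "p > -1"
  shows "((\<lambda>s. exp (- c * s) * s powr p) has_integral (Gamma (p + 1) * c powr (- (p + 1)))) {0<..}"
proof -
  let ?f = "\<lambda>t::real. t powr p / exp t"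
  have "{0..} = insert 0 ({0<..} :: real set)"
    by auto
  then have "(?f has_integral Gamma (p + 1)) {0<..}"
    using Gamma_integral_real[of "p + 1"] p by (simp add: has_integral_insert_iff)
  moreover have "(\<lambda>x. c * x + 0) ` {0<..} = ({0<..} :: real set)"
  proof safe
    fix y :: real assume "y > 0"
    then show "y \<in> (\<lambda>x. c * x + 0) ` {0<..}"
      using c by (intro image_eqI[of _ _ "y / c"]) auto
  qed (use c in auto)
  ultimately have "((\<lambda>x. c * ?f (c * x + 0)) has_integral Gamma (p + 1)) {0<..}"
    using c by (intro has_integral_affine_substitution_nonneg) auto
  then have "((\<lambda>x. c powr (- (p + 1)) * (c * ?f (c * x))) has_integral
               c powr (- (p + 1)) * Gamma (p + 1)) {0<..}"
    unfolding add_0_right by (rule has_integral_mult_right)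
  then show ?thesis
  proof (rule has_integral_eq_rhs[OF has_integral_eq, rotated], simp add: mult.commute)
    fix x :: real assume "x \<in> {0<..}"
    have "c powr (- (p + 1)) * c powr 1 * c powr p = c powr (- (p + 1) + 1 + p)"
      by (simp only: powr_add)
    then have "c powr (- (p + 1)) * c powr 1 * c powr p = 1"
      using c by simp
    then have "c powr (- (p + 1)) * (c * (c * x) powr p) = x powr p"
      using c \<open>x \<in> {0<..}\<close> by (simp add: powr_mult)
    then show "c powr (- (p + 1)) * (c * ?f (c * x)) = exp (- c * x) * x powr p"
      by (simp add: exp_minus field_simps)
  qed
qed

lemma integrable_exp_mult_powr_on:
  fixes c q :: real
  assumes "c > 0" "q > -1" "T \<in> sets lebesgue" "T \<subseteq> {0<..}"
  shows "(\<lambda>s. exp (- c * s) * s powr q) integrable_on T"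
  by (rule integrable_on_subset_nonneg[of _ "{0<..}"])
     (use has_integral_exp_mult_powr[OF assms(1,2)] assms(3,4) in auto)

lemma one_plus_powr_le:
  fixes t q :: real
  assumes t: "t > 0"
  shows "(1 + t) powr q \<le> 2 powr max q 0 * (1 + t powr max q 0)"
proof -
  let ?m = "max q 0"
  have "(1 + t) powr q \<le> (2 * max 1 t) powr ?m"
    using t by (intro order.trans[OF powr_mono powr_mono2]) auto
  also have "\<dots> = 2 powr ?m * max 1 t powr ?m"
    using t by (simp add: powr_mult)
  also have "\<dots> \<le> 2 powr ?m * (1 + t powr ?m)"
    using t by (intro mult_left_mono) (auto simp: max_def)
  finally show ?thesis .
qed

lemma integrable_exp_powr_one_plus_powr:
  fixes c p q :: real
  assumes c: "c > 0" and p: "p > -1"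
  shows "(\<lambda>t. exp (- c * t) * t powr p * (1 + t) powr q) integrable_on {0<..}"
proof (rule measurable_bounded_by_integrable_imp_integrable_real)
  let ?m = "max q 0"
  show "(\<lambda>t. exp (- c * t) * t powr p * (1 + t) powr q) \<in> borel_measurable (lebesgue_on {0<..})"
    by (rule continuous_imp_measurable_on_sets_lebesgue) (auto intro!: continuous_intros)
  show "(\<lambda>t. 2 powr ?m * (exp (- c * t) * t powr p + exp (- c * t) * t powr (p + ?m)))
          integrable_on {0<..}"
  proof (intro integrable_on_mult_right integrable_add has_integral_integrable)
    have "p + ?m > -1"
      using p by linarith
    then show "((\<lambda>t. exp (- c * t) * t powr (p + ?m)) has_integral
                 Gamma (p + ?m + 1) * c powr (- (p + ?m + 1))) {0<..}"
      by (rule has_integral_exp_mult_powr[OF c])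
  qed (rule has_integral_exp_mult_powr[OF c p])
  show "\<bar>exp (- c * t) * t powr p * (1 + t) powr q\<bar>
          \<le> 2 powr ?m * (exp (- c * t) * t powr p + exp (- c * t) * t powr (p + ?m))"
    if "t \<in> {0<..}" for t
  proof -
    from that have t: "t > 0" by simp
    have "\<bar>exp (- c * t) * t powr p * (1 + t) powr q\<bar>
            \<le> exp (- c * t) * t powr p * (2 powr ?m * (1 + t powr ?m))"
      using t by (simp add: mult_left_mono one_plus_powr_le)
    also have "\<dots> = 2 powr ?m * (exp (- c * t) * t powr p + exp (- c * t) * t powr (p + ?m))"
      using t by (simp add: powr_add algebra_simps)
    finally show ?thesis .
  qed
qed auto

lemma has_integral_exp_one_plus_powr:
  fixes c q :: real
  assumes c: "c > 0" and q: "q > -1"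
  shows "((\<lambda>t. exp (- c * t) * (1 + t) powr q) has_integral
           exp c * integral {1<..} (\<lambda>s. exp (- c * s) * s powr q)) {0<..}"
proof -
  let ?f = "\<lambda>s. exp (- c * s) * s powr q"
  have "?f integrable_on {1<..}"
    using c q by (rule integrable_exp_mult_powr_on) auto
  moreover have "(\<lambda>x. 1 * x + 1) ` {0<..} = ({1<..} :: real set)"
  proof safe
    fix y :: real assume "y > 1"
    then show "y \<in> (\<lambda>x. 1 * x + 1) ` {0<..}"
      by (intro image_eqI[of _ _ "y - 1"]) auto
  qed auto
  ultimately have "((\<lambda>x. 1 * ?f (1 * x + 1)) has_integral integral {1<..} ?f) {0<..}"
    by (intro has_integral_affine_substitution_nonneg) auto
  then have "((\<lambda>x. exp c * ?f (x + 1)) has_integral exp c * integral {1<..} ?f) {0<..}"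
    unfolding mult_1 by (rule has_integral_mult_right)
  moreover have "exp c * ?f (x + 1) = exp (- c * x) * (1 + x) powr q" for x
    by (simp add: algebra_simps flip: exp_add)
  ultimately show ?thesis
    by simp
qed

lemma integral_exp_one_plus_powr_le:
  fixes c q :: real
  assumes c: "c > 0" and q: "q > -1"
  shows "integral {0<..} (\<lambda>t. exp (- c * t) * (1 + t) powr q) \<le> exp c * Gamma (q + 1) * c powr (- (q + 1))"
proof -
  let ?f = "\<lambda>s. exp (- c * s) * s powr q"
  have f: "(?f has_integral Gamma (q + 1) * c powr (- (q + 1))) {0<..}"
    by (rule has_integral_exp_mult_powr[OF c q])
  have "integral {1<..} ?f \<le> integral {0<..} ?f"
    using c q by (intro integral_subset_le integrable_exp_mult_powr_on) auto
  then have "integral {1<..} ?f \<le> Gamma (q + 1) * c powr (- (q + 1))"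
    by (simp only: integral_unique[OF f])
  then show ?thesis
    using integral_unique[OF has_integral_exp_one_plus_powr[OF c q]] by simp
qed

lemma integral_exp_powr_one_plus_powr_le:
  fixes c p q :: real
  assumes c: "c > 0" and p: "p \<ge> 0" and q: "q > -1"
  shows "integral {0<..} (\<lambda>t. exp (- c * t) * t powr p * (1 + t) powr (q - p))
           \<le> exp c * Gamma (q + 1) * c powr (- (q + 1))"
proof -
  have "integral {0<..} (\<lambda>t. exp (- c * t) * t powr p * (1 + t) powr (q - p))
          \<le> integral {0<..} (\<lambda>t. exp (- c * t) * (1 + t) powr q)"
  proof (rule integral_le)
    show "(\<lambda>t. exp (- c * t) * t powr p * (1 + t) powr (q - p)) integrable_on {0<..}"
      using c p by (intro integrable_exp_powr_one_plus_powr) auto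
    show "(\<lambda>t. exp (- c * t) * (1 + t) powr q) integrable_on {0<..}"
      using has_integral_exp_one_plus_powr[OF c q] by blast
    fix t :: real assume "t \<in> {0<..}"
    then have "t powr p * (1 + t) powr (q - p) \<le> (1 + t) powr p * (1 + t) powr (q - p)"
      using p by (intro mult_right_mono powr_mono2) auto
    also have "\<dots> = (1 + t) powr q"
      using \<open>t \<in> {0<..}\<close> by (simp flip: powr_add)
    finally show "exp (- c * t) * t powr p * (1 + t) powr (q - p) \<le> exp (- c * t) * (1 + t) powr q"
      by (simp add: mult.assoc)
  qed
  also have "\<dots> \<le> exp c * Gamma (q + 1) * c powr (- (q + 1))"
    by (rule integral_exp_one_plus_powr_le[OF c q])
  finally show ?thesis .
qed

lemma has_integral_powr_Ioc_0_1:
  fixes r :: real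
  assumes "r > -1"
  shows "((\<lambda>x. x powr r) has_integral (1 / (r + 1))) {0<..1}"
proof -
  have "{0..1} = insert 0 ({0<..1} :: real set)"
    by auto
  then show ?thesis
    using has_integral_powr_from_0[of r 1] assms by (simp add: has_integral_insert_iff)
qed

lemma integral_Ioi_split_at_1:
  fixes f :: "real \<Rightarrow> real"
  assumes f: "f integrable_on {0<..}" and nonneg: "\<And>t. t > 0 \<Longrightarrow> 0 \<le> f t"
  shows "integral {0<..} f = integral {0<..1} f + integral {1<..} f"
proof -
  have "{0<..} = {0<..1} \<union> ({1<..} :: real set)"
    by auto
  moreover have "integral ({0<..1} \<union> {1<..}) f = integral {0<..1} f + integral {1<..} f"
  proof (rule integral_Un)
    show "f integrable_on {0<..1}" "f integrable_on {1<..}"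
      using nonneg by (auto intro!: integrable_on_subset_nonneg[OF f])
    have "{0<..1} \<inter> {1<..} = ({} :: real set)"
      by auto
    then show "negligible ({0<..1} \<inter> {1<..} :: real set)"
      by simp
  qed
  ultimately show ?thesis
    by simp
qed

lemma powr_le_two_powr_mult_one_plus_powr:
  fixes a t :: real
  assumes a: "a \<le> 1" and t: "t \<ge> 1"
  shows "t powr (a - 1) \<le> 2 powr (1 - a) * (1 + t) powr (a - 1)"
proof -
  have "2 powr (1 - a) * (2 * t) powr (a - 1) \<le> 2 powr (1 - a) * (1 + t) powr (a - 1)"
    using a t by (intro mult_left_mono powr_mono2') auto
  moreover have "2 powr (1 - a) * (2 * t) powr (a - 1) = t powr (a - 1)"
    using t by (simp add: powr_mult flip: powr_add)
  ultimately show ?thesis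
    by simp
qed

lemma exp_powr_one_plus_powr_le_on_Ioc_0_1:
  fixes a b z t :: real
  assumes z: "z > 0" and a: "a \<le> 1" and t: "0 < t" "t \<le> 1"
  shows "exp (- z * t) * t powr (a - 1) * (1 + t) powr (b - a - 1)
           \<le> 2 powr (b - a - 1) * t powr (a - 1) + 2 powr (1 - a) * exp z * (exp (- z * t) * t powr (b - 2))"
proof -
  have exp_le: "exp (- z * t) \<le> 1"
    using z t by simp
  show ?thesis
  proof (cases "b - a - 1 \<ge> 0")
    case True
    have "exp (- z * t) * t powr (a - 1) * (1 + t) powr (b - a - 1) \<le> 1 * t powr (a - 1) * 2 powr (b - a - 1)"
      using True t by (intro mult_mono exp_le order_refl powr_mono2) auto
    also have "\<dots> = 2 powr (b - a - 1) * t powr (a - 1)"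
      by (simp add: mult.commute)
    finally show ?thesis
      by (simp add: add_increasing2)
  next
    case False
    have "exp (- z * t) * t powr (a - 1) * (1 + t) powr (b - a - 1) \<le> 1 * t powr (b - 2) * 1"
    proof (intro mult_mono exp_le powr_mono')
      show "(1 + t) powr (b - a - 1) \<le> 1"
        using False t powr_mono[of "b - a - 1" 0 "1 + t"] by simp
    qed (use False t in auto)
    also have "\<dots> \<le> 2 powr (1 - a) * exp z * (exp (- z * t) * t powr (b - 2))"
    proof -
      have "1 \<le> 2 powr (1 - a)"
        using a by (intro ge_one_powr_ge_zero) auto
      moreover have "0 \<le> z * (1 - t)"
        using z t by simp
      then have "1 \<le> exp (z + - z * t)"
        by (simp add: algebra_simps)
      then have "1 \<le> exp z * exp (- z * t)"
        by (simp only: exp_add)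
      ultimately have "1 * 1 \<le> 2 powr (1 - a) * (exp z * exp (- z * t))"
        by (rule mult_mono) auto
      then have "1 * 1 * t powr (b - 2) \<le> 2 powr (1 - a) * (exp z * exp (- z * t)) * t powr (b - 2)"
        by (rule mult_right_mono) simp
      then show ?thesis
        by (simp only: mult.assoc mult_1)
    qed
    finally show ?thesis
      by (simp add: add_increasing)
  qed
qed

lemma integral_exp_powr_one_plus_powr_Ioi_1_le:
  fixes a b z :: real
  assumes z: "z > 0" and a: "0 < a" "a \<le> 1" and b: "b > 1"
  shows "integral {1<..} (\<lambda>t. exp (- z * t) * t powr (a - 1) * (1 + t) powr (b - a - 1))
           \<le> 2 powr (1 - a) * exp z * integral {1<..} (\<lambda>s. exp (- z * s) * s powr (b - 2))"
proof -
  let ?h = "\<lambda>t. exp (- z * t) * (1 + t) powr (b - 2)"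
  have h: "(?h has_integral exp z * integral {1<..} (\<lambda>s. exp (- z * s) * s powr (b - 2))) {0<..}"
    using z b by (intro has_integral_exp_one_plus_powr) auto
  have h0: "?h integrable_on {0<..}"
    using h by blast
  have h1: "?h integrable_on {1<..}"
    by (rule integrable_on_subset_nonneg[OF h0]) auto
  have "integral {1<..} (\<lambda>t. exp (- z * t) * t powr (a - 1) * (1 + t) powr (b - a - 1))
          \<le> integral {1<..} (\<lambda>t. 2 powr (1 - a) * ?h t)"
  proof (rule integral_le)
    have "(\<lambda>t. exp (- z * t) * t powr (a - 1) * (1 + t) powr (b - a - 1)) integrable_on {0<..}"
      using z a by (intro integrable_exp_powr_one_plus_powr) auto
    then show "(\<lambda>t. exp (- z * t) * t powr (a - 1) * (1 + t) powr (b - a - 1)) integrable_on {1<..}"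
      by (rule integrable_on_subset_nonneg) auto
    show "(\<lambda>t. 2 powr (1 - a) * ?h t) integrable_on {1<..}"
      using h1 by (rule integrable_on_mult_right)
    fix t :: real assume "t \<in> {1<..}"
    then have "t powr (a - 1) \<le> 2 powr (1 - a) * (1 + t) powr (a - 1)"
      using a by (intro powr_le_two_powr_mult_one_plus_powr) auto
    then have "exp (- z * t) * t powr (a - 1) * (1 + t) powr (b - a - 1)
                 \<le> exp (- z * t) * (2 powr (1 - a) * (1 + t) powr (a - 1)) * (1 + t) powr (b - a - 1)"
      by (simp add: mult_right_mono)
    also have "\<dots> = 2 powr (1 - a) * ?h t"
      using \<open>t \<in> {1<..}\<close> by (simp add: algebra_simps flip: powr_add)
    finally show "exp (- z * t) * t powr (a - 1) * (1 + t) powr (b - a - 1) \<le> 2 powr (1 - a) * ?h t" .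
  qed
  also have "\<dots> = 2 powr (1 - a) * integral {1<..} ?h"
    by simp
  also have "\<dots> \<le> 2 powr (1 - a) * integral {0<..} ?h"
    by (intro mult_left_mono integral_subset_le h0 h1) auto
  finally show ?thesis
    using integral_unique[OF h] by (simp add: mult.assoc)
qed

lemma integral_exp_powr_one_plus_powr_le_of_le_1:
  fixes a b z :: real
  assumes z: "z > 0" and a: "0 < a" "a \<le> 1" and b: "b > 1"
  shows "integral {0<..} (\<lambda>t. exp (- z * t) * t powr (a - 1) * (1 + t) powr (b - a - 1))
           \<le> 2 powr (b - a - 1) / a + 2 powr (1 - a) * exp z * z powr (1 - b) * Gamma (b - 1)"
proof -
  let ?f = "\<lambda>t. exp (- z * t) * t powr (a - 1) * (1 + t) powr (b - a - 1)"
  let ?g = "\<lambda>s. exp (- z * s) * s powr (b - 2)"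
  let ?C = "2 powr (1 - a) * exp z"
  have g: "(?g has_integral z powr (1 - b) * Gamma (b - 1)) {0<..}"
    using has_integral_exp_mult_powr[of z "b - 2"] z b by (simp add: mult.commute)
  have "?f integrable_on {0<..}"
    using z a by (intro integrable_exp_powr_one_plus_powr) auto
  then have f_split: "integral {0<..} ?f = integral {0<..1} ?f + integral {1<..} ?f"
    by (rule integral_Ioi_split_at_1) simp
  have g_split: "integral {0<..} ?g = integral {0<..1} ?g + integral {1<..} ?g"
    using g by (intro integral_Ioi_split_at_1) auto
  have g01: "?g integrable_on {0<..1}"
    using z b by (intro integrable_exp_mult_powr_on) auto
  have bound: "((\<lambda>t. 2 powr (b - a - 1) * t powr (a - 1) + ?C * ?g t) has_integral
          2 powr (b - a - 1) * (1 / (a - 1 + 1)) + ?C * integral {0<..1} ?g) {0<..1}"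
    using a g01 by (intro has_integral_add has_integral_mult_right has_integral_powr_Ioc_0_1 integrable_integral) auto
  have f01: "?f integrable_on {0<..1}"
    by (rule integrable_on_subset_nonneg[OF \<open>?f integrable_on {0<..}\<close>]) auto
  have "integral {0<..1} ?f \<le> 2 powr (b - a - 1) * (1 / (a - 1 + 1)) + ?C * integral {0<..1} ?g"
  proof (rule has_integral_le[OF integrable_integral[OF f01] bound])
    show "?f t \<le> 2 powr (b - a - 1) * t powr (a - 1) + ?C * ?g t" if "t \<in> {0<..1}" for t
      using exp_powr_one_plus_powr_le_on_Ioc_0_1[OF z a(2), of t b] that by (simp add: mult.assoc)
  qed
  moreover have "integral {1<..} ?f \<le> ?C * integral {1<..} ?g"
    using integral_exp_powr_one_plus_powr_Ioi_1_le[OF z a b] by simp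
  ultimately have "integral {0<..} ?f \<le> 2 powr (b - a - 1) / a + ?C * integral {0<..} ?g"
    unfolding f_split g_split by (simp add: distrib_left)
  also have "integral {0<..} ?g = z powr (1 - b) * Gamma (b - 1)"
    by (rule integral_unique[OF g])
  finally show ?thesis
    by (simp only: mult.assoc)
qed

lemma abs_exp_minus_one_minus_le:
  fixes x :: real
  shows "\<bar>exp x - 1 - x\<bar> \<le> x\<^sup>2 * exp \<bar>x\<bar>"
proof -
  obtain s where s: "\<bar>s\<bar> \<le> \<bar>x\<bar>" and "exp x = (\<Sum>m<2. x ^ m / fact m) + exp s / fact 2 * x ^ 2"
    using Maclaurin_exp_le[of x 2] by blast
  then have "exp x - 1 - x = exp s / 2 * x\<^sup>2"
    by (simp add: eval_nat_numeral)
  moreover have "0 \<le> exp s / 2 * x\<^sup>2"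
    by simp
  ultimately have "\<bar>exp x - 1 - x\<bar> = exp s / 2 * x\<^sup>2"
    by (simp only: abs_of_nonneg)
  also have "\<dots> \<le> exp \<bar>x\<bar> * x\<^sup>2"
  proof (rule mult_right_mono)
    have "exp s \<le> exp \<bar>x\<bar>"
      using s by simp
    then show "exp s / 2 \<le> exp \<bar>x\<bar>"
      using exp_gt_zero[of s] by linarith
  qed simp
  finally show ?thesis
    by (simp only: mult.commute)
qed

lemma has_real_derivative_Laplace_integral:
  fixes g :: "real \<Rightarrow> real" and z :: real
  assumes z: "z > 0" and nonneg: "\<And>t. t > 0 \<Longrightarrow> 0 \<le> g t"
    and moments: "\<And>w k. w > 0 \<Longrightarrow> (\<lambda>t. exp (- w * t) * t ^ k * g t) integrable_on {0<..}"
  shows "((\<lambda>w. integral {0<..} (\<lambda>t. exp (- w * t) * g t)) has_real_derivative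
           - integral {0<..} (\<lambda>t. exp (- z * t) * t * g t)) (at z)"
proof -
  define L where "L = (\<lambda>w. integral {0<..} (\<lambda>t. exp (- w * t) * g t))"
  define D where "D = - integral {0<..} (\<lambda>t. exp (- z * t) * t * g t)"
  define \<rho> where "\<rho> = (\<lambda>t. exp (- (z / 2) * t) * t\<^sup>2 * g t)"
  have int0: "(\<lambda>t. exp (- w * t) * g t) integrable_on {0<..}" if "w > 0" for w
    using moments[OF that, of 0] by simp
  have int1: "(\<lambda>t. exp (- z * t) * t * g t) integrable_on {0<..}"
    using moments[OF z, of 1] by simp
  have int2: "\<rho> integrable_on {0<..}"
    using moments[of "z / 2" 2] z by (simp add: \<rho>_def)
  have pointwise:
    "\<bar>(exp (- (z + h) * t) * g t - exp (- z * t) * g t) / h + exp (- z * t) * t * g t\<bar> \<le> \<bar>h\<bar> * \<rho> t"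
    if h: "h \<noteq> 0" "\<bar>h\<bar> < z / 2" and t: "t > 0" for h t
  proof -
    have "\<bar>(exp (- (z + h) * t) * g t - exp (- z * t) * g t) / h + exp (- z * t) * t * g t\<bar>
            = exp (- z * t) * g t * \<bar>exp (- h * t) - 1 - (- h * t)\<bar> / \<bar>h\<bar>"
    proof -
      have "exp (- (z + h) * t) = exp (- z * t) * exp (- h * t)"
        by (simp add: algebra_simps flip: exp_add)
      then have "(exp (- (z + h) * t) * g t - exp (- z * t) * g t) / h + exp (- z * t) * t * g t
                   = exp (- z * t) * g t * (exp (- h * t) - 1 - (- h * t)) / h"
        using h by (simp add: field_simps)
      then show ?thesis
        using nonneg[OF t] by (simp add: abs_mult abs_divide)
    qed
    also have "\<dots> \<le> exp (- z * t) * g t * ((- h * t)\<^sup>2 * exp \<bar>- h * t\<bar>) / \<bar>h\<bar>"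
      using nonneg[OF t] by (intro divide_right_mono mult_left_mono abs_exp_minus_one_minus_le) auto
    also have "\<dots> = \<bar>h\<bar> * (exp (\<bar>h\<bar> * t - z * t) * t\<^sup>2 * g t)"
      using h t by (simp add: power2_eq_square abs_mult exp_diff exp_minus_inverse field_simps)
    also have "\<dots> \<le> \<bar>h\<bar> * \<rho> t"
      unfolding \<rho>_def using h t nonneg[OF t]
      by (intro mult_left_mono mult_right_mono) (auto simp: algebra_simps)
    finally show ?thesis .
  qed
  have difference_quotient:
    "\<bar>(L (z + h) - L z) / h - D\<bar> \<le> \<bar>h\<bar> * integral {0<..} \<rho>" if h: "h \<noteq> 0" "\<bar>h\<bar> < z / 2" for h
  proof -
    let ?Q = "\<lambda>t. (exp (- (z + h) * t) * g t - exp (- z * t) * g t) / h + exp (- z * t) * t * g t"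
    have "z + h > 0"
      using h by linarith
    then have "(?Q has_integral (L (z + h) - L z) / h + integral {0<..} (\<lambda>t. exp (- z * t) * t * g t)) {0<..}"
      unfolding L_def
      by (intro has_integral_add has_integral_divide has_integral_diff integrable_integral int0 int1 z)
    then have Q: "(?Q has_integral (L (z + h) - L z) / h - D) {0<..}"
      by (simp add: D_def)
    have "norm (integral {0<..} ?Q) \<le> integral {0<..} (\<lambda>t. \<bar>h\<bar> * \<rho> t)"
    proof (rule integral_norm_bound_integral)
      show "?Q integrable_on {0<..}"
        using Q by blast
      show "(\<lambda>t. \<bar>h\<bar> * \<rho> t) integrable_on {0<..}"
        using int2 by (rule integrable_on_mult_right)
    qed (use pointwise[OF h] in simp)
    then show ?thesis
      using integral_unique[OF Q] by simp
  qed
  have "((\<lambda>h. (L (z + h) - L z) / h - D) \<longlongrightarrow> 0) (at 0)"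
  proof (rule Lim_null_comparison)
    show "\<forall>\<^sub>F h in at 0. norm ((L (z + h) - L z) / h - D) \<le> \<bar>h\<bar> * integral {0<..} \<rho>"
      unfolding eventually_at
    proof (intro exI[of _ "z / 2"] conjI ballI impI)
      fix h :: real assume "h \<noteq> 0 \<and> dist h 0 < z / 2"
      then have "h \<noteq> 0" "\<bar>h\<bar> < z / 2"
        by auto
      then show "norm ((L (z + h) - L z) / h - D) \<le> \<bar>h\<bar> * integral {0<..} \<rho>"
        using difference_quotient by simp
    qed (use z in simp)
    have "((\<lambda>h. \<bar>h\<bar> * integral {0<..} \<rho>) \<longlongrightarrow> \<bar>0\<bar> * integral {0<..} \<rho>) (at (0::real))"
      by (intro tendsto_intros)
    then show "((\<lambda>h. \<bar>h\<bar> * integral {0<..} \<rho>) \<longlongrightarrow> 0) (at 0)"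
      by simp
  qed
  then have "(L has_real_derivative D) (at z)"
    unfolding DERIV_def by (rule LIM_zero_iff[THEN iffD1])
  then show ?thesis
    by (simp add: L_def D_def)
qed

lemma has_real_derivative_Kummer_integral:
  fixes a b z :: real
  assumes z: "z > 0" and a: "a > 0"
  shows "((\<lambda>w. integral {0<..} (\<lambda>t. exp (- w * t) * t powr (a - 1) * (1 + t) powr (b - a - 1)))
           has_real_derivative
           - integral {0<..} (\<lambda>t. exp (- z * t) * t powr a * (1 + t) powr (b - a - 1))) (at z)"
proof -
  let ?g = "\<lambda>t. t powr (a - 1) * (1 + t) powr (b - a - 1)"
  have moments: "(\<lambda>t. exp (- w * t) * t ^ k * ?g t) integrable_on {0<..}" if "w > 0" for w k
  proof (rule integrable_eq)
    show "(\<lambda>t. exp (- w * t) * t powr (a - 1 + real k) * (1 + t) powr (b - a - 1)) integrable_on {0<..}"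
      using that a by (intro integrable_exp_powr_one_plus_powr) auto
    show "exp (- w * t) * t powr (a - 1 + real k) * (1 + t) powr (b - a - 1) = exp (- w * t) * t ^ k * ?g t"
      if "t \<in> {0<..}" for t
      using that by (simp add: powr_add powr_realpow)
  qed
  have "((\<lambda>w. integral {0<..} (\<lambda>t. exp (- w * t) * ?g t)) has_real_derivative
          - integral {0<..} (\<lambda>t. exp (- z * t) * t * ?g t)) (at z)"
    using z moments by (intro has_real_derivative_Laplace_integral) auto
  moreover have "integral {0<..} (\<lambda>t. exp (- z * t) * t * ?g t)
                   = integral {0<..} (\<lambda>t. exp (- z * t) * t powr a * (1 + t) powr (b - a - 1))"
    by (rule integral_cong) (simp add: powr_mult_base)
  ultimately show ?thesis
    by (simp add: mult.assoc)
qed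

lemma Gamma_mult_abs_KummerU:
  fixes a b z :: real
  assumes "z > 0" and "a > 0"
  shows "Gamma a * \<bar>KummerU a b z\<bar>
           = integral {0<..} (\<lambda>t. exp (- z * t) * t powr (a - 1) * (1 + t) powr (b - a - 1))"
proof -
  have "0 \<le> integral {0<..} (\<lambda>t. exp (- z * t) * t powr (a - 1) * (1 + t) powr (b - a - 1))"
    using assms by (intro integral_nonneg integrable_exp_powr_one_plus_powr) auto
  then show ?thesis
    using Gamma_real_pos[OF \<open>a > 0\<close>] by (simp add: KummerU_def abs_divide)
qed

lemma Gamma_mult_abs_deriv_KummerU:
  fixes a b z :: real
  assumes "z > 0" and "a > 0"
  shows "Gamma a * \<bar>deriv (\<lambda>w. KummerU a b w) z\<bar>
           = integral {0<..} (\<lambda>t. exp (- z * t) * t powr a * (1 + t) powr (b - a - 1))"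
proof -
  let ?J = "integral {0<..} (\<lambda>t. exp (- z * t) * t powr a * (1 + t) powr (b - a - 1))"
  have "0 \<le> ?J"
    using assms by (intro integral_nonneg integrable_exp_powr_one_plus_powr) auto
  have "((\<lambda>w. KummerU a b w) has_real_derivative - ?J / Gamma a) (at z)"
    unfolding KummerU_def using has_real_derivative_Kummer_integral[OF assms]
    by (rule DERIV_cdivide)
  then have "deriv (\<lambda>w. KummerU a b w) z = - ?J / Gamma a"
    by (rule DERIV_imp_deriv)
  then show ?thesis
    using \<open>0 \<le> ?J\<close> Gamma_real_pos[OF \<open>a > 0\<close>] by (simp add: abs_divide)
qed

theorem lemmaA1:
  fixes a b z :: real
  assumes "z > 0" and "a > 0"
  shows "(b > 1 \<longrightarrow>
            Gamma a * \<bar>KummerU a b z\<bar> \<le>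
              (if a \<ge> 1 then exp z * z powr (1 - b) * Gamma (b - 1)
               else 2 powr (b - a - 1) / a + 2 powr (1 - a) * exp z * z powr (1 - b) * Gamma (b - 1)))
       \<and> (b > 0 \<longrightarrow>
            Gamma a * \<bar>deriv (\<lambda>w. KummerU a b w) z\<bar> \<le> Gamma b * exp z * z powr (- b))"
proof (intro conjI impI)
  assume "b > 1"
  show "Gamma a * \<bar>KummerU a b z\<bar> \<le>
          (if a \<ge> 1 then exp z * z powr (1 - b) * Gamma (b - 1)
           else 2 powr (b - a - 1) / a + 2 powr (1 - a) * exp z * z powr (1 - b) * Gamma (b - 1))"
    unfolding Gamma_mult_abs_KummerU[OF assms]
    using integral_exp_powr_one_plus_powr_le[of z "a - 1" "b - 2"]
          integral_exp_powr_one_plus_powr_le_of_le_1[of z a b] assms \<open>b > 1\<close>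
    by (auto simp: algebra_simps)
next
  assume "b > 0"
  then show "Gamma a * \<bar>deriv (\<lambda>w. KummerU a b w) z\<bar> \<le> Gamma b * exp z * z powr (- b)"
    unfolding Gamma_mult_abs_deriv_KummerU[OF assms]
    using integral_exp_powr_one_plus_powr_le[of z a "b - 1"] assms by (simp add: algebra_simps)
qed

end
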